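(* For the concurrent graph sharing game, \[ \inf_{(G,w)} v(G,w) = \tfrac{1}{3} \qquad\text{and}\qquad \inf_{(G,w),\ G \text{ is a tree}} v(G,w) = \tfrac{1}{2}, \] where the first infimum ranges over all instances $(G,w)$ and the second over all instances $(G,w)$ in which $G$ is a tree.
   Context: An instance of the concurrent graph sharing game is a pair $(G,w)$ where $G=(V,E)$ is a finite connected graph and $w:V\to(0,1]$ is a positive vertex-weight function with $\sum_{v\in V} w(v)=1$; for $A\subseteq V$ write $w(A)=\sum_{a\in A}w(a)$. It is assumed throughout that no two distinct subsets of vertices have the same total weight, so ties never occur. The game is played by two players, 1st and 2nd. 1st begins by taking any vertex. In each subsequent round, the player whose sum of weights of vertices taken so far is smaller takes a not-yet-taken vertex adjacent to some already taken vertex (so the set of all taken vertices is always connected, and exactly one new vertex is taken per round); the game ends when all vertices are taken. For a vertex $a$, let $F_a$ and $S_a$ be the sets of vertices taken by 1st and 2nd, respectively, when 1st starts with $a$ and from then on 1st plays to maximize $w(F_a)$ and 2nd plays to maximize $w(S_a)$. The value of the instance is $v(G,w)=\max_{a\in V} w(F_a)$, the maximum total weight 1st can guarantee to take. *)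

theory Defs
  imports Complex_Main
begin

definition graph_connected :: "nat set \<Rightarrow> (nat \<Rightarrow> nat \<Rightarrow> bool) \<Rightarrow> bool" where
  "graph_connected V E \<longleftrightarrow> (\<forall>u\<in>V. \<forall>v\<in>V. E\<^sup>*\<^sup>* u v)"

definition simple_graph :: "nat set \<Rightarrow> (nat \<Rightarrow> nat \<Rightarrow> bool) \<Rightarrow> bool" where
  "simple_graph V E \<longleftrightarrow> finite V \<and> V \<noteq> {} \<and>
     (\<forall>u v. E u v \<longrightarrow> u \<in> V \<and> v \<in> V) \<and>
     (\<forall>u v. E u v \<longrightarrow> E v u) \<and> (\<forall>v. \<not> E v v)"

definition has_cycle :: "nat set \<Rightarrow> (nat \<Rightarrow> nat \<Rightarrow> bool) \<Rightarrow> bool" where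
  "has_cycle V E \<longleftrightarrow> (\<exists>xs. length xs \<ge> 3 \<and> distinct xs \<and> set xs \<subseteq> V \<and>
     (\<forall>i. Suc i < length xs \<longrightarrow> E (xs ! i) (xs ! Suc i)) \<and> E (last xs) (hd xs))"

definition is_tree :: "nat set \<Rightarrow> (nat \<Rightarrow> nat \<Rightarrow> bool) \<Rightarrow> bool" where
  "is_tree V E \<longleftrightarrow> graph_connected V E \<and> \<not> has_cycle V E"

definition game_instance :: "nat set \<Rightarrow> (nat \<Rightarrow> nat \<Rightarrow> bool) \<Rightarrow> (nat \<Rightarrow> real) \<Rightarrow> bool" where
  "game_instance V E w \<longleftrightarrow> simple_graph V E \<and> graph_connected V E \<and>
     (\<forall>v\<in>V. 0 < w v \<and> w v \<le> 1) \<and> sum w V = 1 \<and>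
     (\<forall>A B. A \<subseteq> V \<longrightarrow> B \<subseteq> V \<longrightarrow> A \<noteq> B \<longrightarrow> sum w A \<noteq> sum w B)"

definition moves :: "nat set \<Rightarrow> (nat \<Rightarrow> nat \<Rightarrow> bool) \<Rightarrow> nat set \<Rightarrow> nat set \<Rightarrow> nat set" where
  "moves V E F S = {v \<in> V - (F \<union> S). \<exists>u \<in> F \<union> S. E u v}"

text \<open>play n V E w F S: the final pair (set of 1st, set of 2nd) reached from position
  (F,S) when both players play optimally (1st maximizing the final weight of his set,
  2nd maximizing the final weight of hers), with at most n further rounds.  Under the distinct-subset-weight
  assumption optimal choices lead to a unique outcome.\<close>
primrec play :: "nat \<Rightarrow> nat set \<Rightarrow> (nat \<Rightarrow> nat \<Rightarrow> bool) \<Rightarrow> (nat \<Rightarrow> real) \<Rightarrow>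
    nat set \<Rightarrow> nat set \<Rightarrow> nat set \<times> nat set" where
  "play 0 V E w F S = (F, S)"
| "play (Suc n) V E w F S =
     (if moves V E F S = {} then (F, S)
      else if sum w F < sum w S then
        play n V E w (insert (arg_max_on (\<lambda>v. sum w (fst (play n V E w (insert v F) S)))
                                  (moves V E F S)) F) S
      else
        play n V E w F (insert (arg_max_on (\<lambda>v. sum w (snd (play n V E w F (insert v S))))
                                  (moves V E F S)) S))"

definition first_set :: "nat set \<Rightarrow> (nat \<Rightarrow> nat \<Rightarrow> bool) \<Rightarrow> (nat \<Rightarrow> real) \<Rightarrow> nat \<Rightarrow> nat set" where
  "first_set V E w a = fst (play (card V - 1) V E w {a} {})"

definition game_value :: "nat set \<Rightarrow> (nat \<Rightarrow> nat \<Rightarrow> bool) \<Rightarrow> (nat \<Rightarrow> real) \<Rightarrow> real" where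
  "game_value V E w = Max ((\<lambda>a. sum w (first_set V E w a)) ` V)"

end

theory Submission
  imports Defs "HOL-Library.Nat_Bijection" "HOL-Real_Asymp.Real_Asymp"
begin

text \<open>
  Let 1st open with a heaviest vertex \<open>m\<close>.  2nd only moves while she is
  lighter than 1st, so after each of her moves \<open>w(S) < w(F) + w(m) \<le> 2 w(F)\<close>; at the end
  \<open>w(F) + w(S) = 1\<close> gives \<open>w(F) > 1/3\<close>.  On a tree, let \<open>g(a,b)\<close> be 1st's final weight when
  1st holds \<open>a\<close> and 2nd holds the neighbour \<open>b\<close>.  Then \<open>g(a,b) + g(b,a) = 1\<close> and
  \<open>g(a,b) \<noteq> 1/2\<close>, so orienting every edge from \<open>a\<close> to \<open>b\<close> when \<open>g(a,b) < 1/2\<close> orients the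
  tree; a sink \<open>a\<close> of this acyclic orientation is an opening guaranteeing 1st more than \<open>1/2\<close>.

  A two-vertex path with almost equal weights has value close to \<open>1/2\<close>.
  A six-vertex graph with three heavy vertices of weight about \<open>1/3\<close> each has value close
  to \<open>1/3\<close>: a winning strategy of 2nd keeping 1st at a single heavy vertex is checked
  exhaustively, after abstracting every weight sum to the lexicographically ordered pair
  (number of heavy vertices, sum of the remaining small parts).
\<close>

lemma arg_max_on_if_finite:
  fixes f :: "'a \<Rightarrow> 'b::linorder"
  assumes "finite S" "S \<noteq> {}"
  shows "arg_max_on f S \<in> S" and "y \<in> S \<Longrightarrow> f y \<le> f (arg_max_on f S)"
proof -
  have "Max (f ` S) \<in> f ` S" using assms by simp
  then obtain x where "x \<in> S" "f x = Max (f ` S)" by (metis imageE)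
  then have "is_arg_max f (\<lambda>x. x \<in> S) x"
    using assms(1) by (simp add: is_arg_max_linorder)
  then have "is_arg_max f (\<lambda>x. x \<in> S) (arg_max_on f S)"
    unfolding arg_max_on_def arg_max_def by (rule someI)
  then show "arg_max_on f S \<in> S" and "y \<in> S \<Longrightarrow> f y \<le> f (arg_max_on f S)"
    by (auto simp: is_arg_max_linorder)
qed

lemma arg_max_on_cong:
  assumes "\<And>x. x \<in> S \<Longrightarrow> f x = g x"
  shows "arg_max_on f S = arg_max_on g S"
proof -
  have "is_arg_max f (\<lambda>x. x \<in> S) = is_arg_max g (\<lambda>x. x \<in> S)"
    using assms unfolding is_arg_max_def by (intro ext) auto
  then show ?thesis unfolding arg_max_on_def arg_max_def by simp
qed

lemma graph_connected_cross_edge: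
  assumes "graph_connected V E" and edge_in: "\<And>u v. E u v \<Longrightarrow> v \<in> V"
    and "T \<subseteq> V" "T \<noteq> {}" "T \<noteq> V"
  shows "\<exists>u\<in>T. \<exists>v\<in>V - T. E u v"
proof -
  obtain u v where u: "u \<in> T" and v: "v \<in> V" "v \<notin> T"
    using assms(3-5) by blast
  have "E\<^sup>*\<^sup>* u v"
    using assms(1,3) u v unfolding graph_connected_def by blast
  then show ?thesis using v(2)
  proof (induction rule: rtranclp_induct)
    case base
    then show ?case using u by simp
  next
    case (step y z)
    then show ?case using edge_in[of y z] by blast
  qed
qed

lemma graph_connected_if_reaches:
  assumes sym: "\<And>u v. E u v \<Longrightarrow> E v u" and reach: "\<And>v. v \<in> V \<Longrightarrow> E\<^sup>*\<^sup>* v r"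
  shows "graph_connected V E"
proof -
  have reverse: "E\<^sup>*\<^sup>* y x" if "E\<^sup>*\<^sup>* x y" for x y
    using that by (induction rule: rtranclp_induct) (auto intro: converse_rtranclp_into_rtranclp sym)
  show ?thesis
    unfolding graph_connected_def using reach reverse by (meson rtranclp_trans)
qed

lemma moves_subset: "moves V E F S \<subseteq> V - (F \<union> S)"
  by (auto simp: moves_def)

lemma moves_commute: "moves V E S F = moves V E F S"
  by (auto simp: moves_def)

lemma has_cycle_if_closed_walk:
  assumes walk: "\<And>i. s i \<in> V \<and> E (s i) (s (Suc i))"
    and no_loop: "\<And>i. s (Suc i) \<noteq> s i"
    and no_backtrack: "\<And>i. s (Suc (Suc i)) \<noteq> s i"
    and "i < j" "s i = s j"
  shows "has_cycle V E"
proof -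
  define J where "J = (LEAST j. \<exists>i<j. s i = s j)"
  have "\<exists>i<J. s i = s J"
    unfolding J_def by (rule LeastI_ex) (use assms(4,5) in blast)
  then obtain I where I: "I < J" "s I = s J" by blast
  have earlier: "s p \<noteq> s q" if "p < q" "q < J" for p q
    using not_less_Least[OF that(2)[unfolded J_def]] that(1) by blast
  have first_repeat: "s p \<noteq> s q" if "p \<noteq> q" "p < J" "q < J" for p q
    using earlier[of p q] earlier[of q p] that by (metis linorder_neqE_nat)
  define xs where "xs = map s [I..<J]"
  have nth_xs: "xs ! k = s (I + k)" if "k < J - I" for k
    using that unfolding xs_def by simp
  have "J \<noteq> Suc I" "J \<noteq> Suc (Suc I)"
    using I no_loop[of I] no_backtrack[of I] by auto
  then have length_xs: "length xs \<ge> 3"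
    using I unfolding xs_def by simp
  have length_eq: "length xs = J - I"
    unfolding xs_def by simp
  have "distinct xs"
    unfolding distinct_conv_nth
  proof (intro allI impI)
    fix p q assume "p < length xs" "q < length xs" "p \<noteq> q"
    then show "xs ! p \<noteq> xs ! q"
      using first_repeat[of "I + p" "I + q"] nth_xs length_eq by simp
  qed
  moreover have "set xs \<subseteq> V"
    using walk unfolding xs_def by auto
  moreover have "\<forall>k. Suc k < length xs \<longrightarrow> E (xs ! k) (xs ! Suc k)"
    using walk nth_xs unfolding xs_def by auto
  moreover have "E (last xs) (hd xs)"
  proof -
    have "J = Suc (J - 1)" using I by simp
    then have "E (s (J - 1)) (s I)" using walk[of "J - 1"] I(2) by metis
    then show ?thesis using I unfolding xs_def by (simp add: last_map hd_map)
  qed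
  ultimately show ?thesis
    unfolding has_cycle_def using length_xs by blast
qed

lemma acyclic_orientation_has_sink:
  assumes "finite V" "V \<noteq> {}" "\<not> has_cycle V E"
    and edge_in: "\<And>u v. E u v \<Longrightarrow> v \<in> V" and loopless: "\<And>v. \<not> E v v"
    and oriented: "\<And>u v. R u v \<Longrightarrow> E u v" and asym: "\<And>u v. R u v \<Longrightarrow> \<not> R v u"
  shows "\<exists>a\<in>V. \<forall>b. \<not> R a b"
proof (rule ccontr)
  assume "\<not> ?thesis"
  then have succ: "\<exists>b. R a b" if "a \<in> V" for a
    using that by blast
  obtain a0 where "a0 \<in> V" using assms(2) by blast
  define s where "s i = ((\<lambda>a. SOME b. R a b) ^^ i) a0" for i
  have walk: "s i \<in> V \<and> R (s i) (s (Suc i))" for i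
  proof (induction i)
    case 0
    then show ?case using \<open>a0 \<in> V\<close> someI_ex[OF succ] unfolding s_def by simp
  next
    case (Suc i)
    then have "s (Suc i) \<in> V" using oriented edge_in by blast
    then show ?case using someI_ex[OF succ] unfolding s_def by simp
  qed
  have "\<not> inj_on s {..card V}"
  proof
    assume "inj_on s {..card V}"
    then have "card {..card V} \<le> card V"
      using card_inj_on_le[of s "{..card V}" V] walk assms(1) by blast
    then show False by simp
  qed
  then obtain i j where "i < j" "s i = s j"
    unfolding inj_on_def by (metis linorder_neqE_nat)
  moreover have "s (Suc i) \<noteq> s i" "s (Suc (Suc i)) \<noteq> s i" for i
    using walk[of i] walk[of "Suc i"] loopless oriented asym by metis+
  ultimately have "has_cycle V E"
    using has_cycle_if_closed_walk[of s V E] walk oriented by blast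
  then show False using assms(3) by contradiction
qed

locale sharing_game =
  fixes V :: "nat set" and E :: "nat \<Rightarrow> nat \<Rightarrow> bool" and w :: "nat \<Rightarrow> real"
  assumes is_instance: "game_instance V E w"
begin

lemma finite_V: "finite V"
  using is_instance by (simp add: game_instance_def simple_graph_def)

lemma finite_subset_V: "A \<subseteq> V \<Longrightarrow> finite A"
  using finite_V finite_subset by blast

lemma V_nonempty: "V \<noteq> {}"
  using is_instance by (simp add: game_instance_def simple_graph_def)

lemma edge_in_V: "E u v \<Longrightarrow> u \<in> V \<and> v \<in> V"
  using is_instance by (simp add: game_instance_def simple_graph_def)

lemma loopless: "\<not> E v v"
  using is_instance by (simp add: game_instance_def simple_graph_def)

lemma weight_pos: "v \<in> V \<Longrightarrow> 0 < w v"
  using is_instance by (simp add: game_instance_def)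

lemma sum_weights: "sum w V = 1"
  using is_instance by (simp add: game_instance_def)

lemma sum_neq: "A \<subseteq> V \<Longrightarrow> B \<subseteq> V \<Longrightarrow> A \<noteq> B \<Longrightarrow> sum w A \<noteq> sum w B"
  using is_instance by (simp add: game_instance_def)

lemma weight_le_sum: "A \<subseteq> V \<Longrightarrow> v \<in> A \<Longrightarrow> w v \<le> sum w A"
  by (rule member_le_sum) (auto intro: less_imp_le weight_pos finite_subset_V)

definition position :: "nat set \<Rightarrow> nat set \<Rightarrow> bool" where
  "position F S \<longleftrightarrow> F \<subseteq> V \<and> S \<subseteq> V \<and> F \<inter> S = {} \<and> F \<union> S \<noteq> {}"

lemma position_insert:
  assumes "position F S" "v \<in> moves V E F S"
  shows "position (insert v F) S" and "position F (insert v S)"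
  using assms moves_subset[of V E F S] by (auto simp: position_def)

lemma card_remaining_insert:
  assumes "v \<in> moves V E F S"
  shows "card (V - insert v (F \<union> S)) = card (V - (F \<union> S)) - 1"
proof -
  have "v \<in> V - (F \<union> S)" using assms moves_subset by blast
  moreover have "V - insert v (F \<union> S) = V - (F \<union> S) - {v}" by blast
  ultimately show ?thesis by (simp add: card_Diff_singleton)
qed

lemma moves_nonempty:
  assumes "position F S" "F \<union> S \<noteq> V"
  shows "moves V E F S \<noteq> {}"
proof -
  have "graph_connected V E" using is_instance by (simp add: game_instance_def)
  then have "\<exists>u\<in>F \<union> S. \<exists>v\<in>V - (F \<union> S). E u v"
    by (rule graph_connected_cross_edge) (use edge_in_V assms in \<open>auto simp: position_def\<close>)
  then show ?thesis unfolding moves_def by blast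
qed

lemma finite_moves: "finite (moves V E F S)"
  using finite_subset[OF moves_subset] finite_V by blast

lemma position_sums_differ: "position F S \<Longrightarrow> sum w F \<noteq> sum w S"
  using sum_neq by (auto simp: position_def)

lemma play_Suc_first:
  fixes n :: nat
  assumes "moves V E F S \<noteq> {}" "sum w F < sum w S"
  defines "b \<equiv> arg_max_on (\<lambda>v. sum w (fst (play n V E w (insert v F) S))) (moves V E F S)"
  shows "play (Suc n) V E w F S = play n V E w (insert b F) S"
    and "b \<in> moves V E F S"
    and "v \<in> moves V E F S \<Longrightarrow>
      sum w (fst (play n V E w (insert v F) S)) \<le> sum w (fst (play n V E w (insert b F) S))"
proof -
  note arg_max = arg_max_on_if_finite[OF finite_moves assms(1)]
  show "play (Suc n) V E w F S = play n V E w (insert b F) S"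
    unfolding b_def using assms by simp
  show "b \<in> moves V E F S"
    "v \<in> moves V E F S \<Longrightarrow>
      sum w (fst (play n V E w (insert v F) S)) \<le> sum w (fst (play n V E w (insert b F) S))"
    unfolding b_def by (fact arg_max(1), fact arg_max(2))
qed

lemma play_Suc_second:
  fixes n :: nat
  assumes "moves V E F S \<noteq> {}" "\<not> sum w F < sum w S"
  defines "b \<equiv> arg_max_on (\<lambda>v. sum w (snd (play n V E w F (insert v S)))) (moves V E F S)"
  shows "play (Suc n) V E w F S = play n V E w F (insert b S)"
    and "b \<in> moves V E F S"
    and "v \<in> moves V E F S \<Longrightarrow>
      sum w (snd (play n V E w F (insert v S))) \<le> sum w (snd (play n V E w F (insert b S)))"
proof -
  note arg_max = arg_max_on_if_finite[OF finite_moves assms(1)]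
  show "play (Suc n) V E w F S = play n V E w F (insert b S)"
    unfolding b_def using assms by simp
  show "b \<in> moves V E F S"
    "v \<in> moves V E F S \<Longrightarrow>
      sum w (snd (play n V E w F (insert v S))) \<le> sum w (snd (play n V E w F (insert b S)))"
    unfolding b_def by (fact arg_max(1), fact arg_max(2))
qed

lemma play_Suc_cases [consumes 2]:
  assumes "position F S" "moves V E F S \<noteq> {}"
  obtains (first_moves) v where "v \<in> moves V E F S" "sum w F < sum w S"
      "play (Suc n) V E w F S = play n V E w (insert v F) S"
    | (second_moves) v where "v \<in> moves V E F S" "sum w S < sum w F"
      "play (Suc n) V E w F S = play n V E w F (insert v S)"
proof (cases "sum w F < sum w S")
  case True
  then show ?thesis using first_moves play_Suc_first[OF assms(2) True] by blast
next
  case False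
  then have "sum w S < sum w F" using position_sums_differ[OF assms(1)] by simp
  then show ?thesis using second_moves play_Suc_second[OF assms(2) False] by blast
qed

lemma play_invariant:
  assumes "position F S" "Q F S"
    and step_first: "\<And>F S v. position F S \<Longrightarrow> Q F S \<Longrightarrow> v \<in> moves V E F S \<Longrightarrow>
      sum w F < sum w S \<Longrightarrow> Q (insert v F) S"
    and step_second: "\<And>F S v. position F S \<Longrightarrow> Q F S \<Longrightarrow> v \<in> moves V E F S \<Longrightarrow>
      sum w S < sum w F \<Longrightarrow> Q F (insert v S)"
  shows "Q (fst (play n V E w F S)) (snd (play n V E w F S))"
  using assms(1,2)
proof (induction n arbitrary: F S)
  case (Suc n)
  show ?case
  proof (cases "moves V E F S = {}")
    case False
    with Suc.prems(1) show ?thesis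
    proof (cases rule: play_Suc_cases[where n = n])
      case (first_moves v)
      then show ?thesis
        using Suc.IH[OF position_insert(1)[OF Suc.prems(1)] step_first[OF Suc.prems]] by simp
    next
      case (second_moves v)
      then show ?thesis
        using Suc.IH[OF position_insert(2)[OF Suc.prems(1)] step_second[OF Suc.prems]] by simp
    qed
  qed (use Suc.prems in simp)
qed simp

lemma play_position:
  assumes "position F S"
  shows "position (fst (play n V E w F S)) (snd (play n V E w F S))"
    and "F \<subseteq> fst (play n V E w F S)" "S \<subseteq> snd (play n V E w F S)"
  using play_invariant[OF assms, where Q = "\<lambda>F' S'. position F' S' \<and> F \<subseteq> F' \<and> S \<subseteq> S'"]
    assms position_insert by blast+

lemma play_covers:
  assumes "position F S" "card (V - (F \<union> S)) \<le> n"
  shows "fst (play n V E w F S) \<union> snd (play n V E w F S) = V"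
  using assms
proof (induction n arbitrary: F S)
  case 0
  then have "V - (F \<union> S) = {}" using finite_V by simp
  then show ?case using 0 by (auto simp: position_def)
next
  case (Suc n)
  have remaining: "card (V - insert v (F \<union> S)) \<le> n" if "v \<in> moves V E F S" for v
    using card_remaining_insert[OF that] Suc.prems(2) by simp
  show ?case
  proof (cases "moves V E F S = {}")
    case True
    then show ?thesis using moves_nonempty[OF Suc.prems(1)] by auto
  next
    case False
    with Suc.prems(1) show ?thesis
    proof (cases rule: play_Suc_cases[where n = n])
      case (first_moves v)
      then show ?thesis
        using Suc.IH[OF position_insert(1)[OF Suc.prems(1)]] remaining by simp
    next
      case (second_moves v)
      then show ?thesis
        using Suc.IH[OF position_insert(2)[OF Suc.prems(1)]] remaining by simp
    qed
  qed
qed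

lemma play_sum_weights:
  assumes "position F S" "card (V - (F \<union> S)) \<le> n"
  shows "sum w (fst (play n V E w F S)) + sum w (snd (play n V E w F S)) = 1"
proof -
  have "fst (play n V E w F S) \<inter> snd (play n V E w F S) = {}"
    using play_position(1)[OF assms(1)] by (simp add: position_def)
  then show ?thesis
    using play_covers[OF assms] sum_weights finite_V
    by (metis finite_Un sum.union_disjoint)
qed

lemma play_swap:
  assumes "position F S"
  shows "play n V E w S F = prod.swap (play n V E w F S)"
  using assms
proof (induction n arbitrary: F S)
  case (Suc n)
  have IH: "play n V E w S' F' = prod.swap (play n V E w F' S')"
    if "v \<in> moves V E F S" "(F', S') = (insert v F, S) \<or> (F', S') = (F, insert v S)" for v F' S'
    using Suc.IH position_insert[OF Suc.prems that(1)] that(2) by blast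
  show ?case
  proof (cases "moves V E F S = {}")
    case True
    then show ?thesis by (simp add: moves_commute)
  next
    case ne: False
    then have ne': "moves V E S F \<noteq> {}" by (simp add: moves_commute)
    show ?thesis
    proof (cases "sum w F < sum w S")
      case True
      define b where "b = arg_max_on (\<lambda>v. sum w (fst (play n V E w (insert v F) S))) (moves V E F S)"
      note first = play_Suc_first[where n = n, OF ne True, folded b_def]
      have "arg_max_on (\<lambda>v. sum w (snd (play n V E w S (insert v F)))) (moves V E S F) = b"
        unfolding b_def moves_commute[of V E S F] by (rule arg_max_on_cong) (simp add: IH)
      then have "play (Suc n) V E w S F = play n V E w S (insert b F)"
        using ne' True by simp
      then show ?thesis using IH[OF first(2)] first(1) by simp
    next
      case False
      then have lighter: "sum w S < sum w F"
        using position_sums_differ[OF Suc.prems] by simp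
      define b where "b = arg_max_on (\<lambda>v. sum w (snd (play n V E w F (insert v S)))) (moves V E F S)"
      note second = play_Suc_second[where n = n, OF ne False, folded b_def]
      have "arg_max_on (\<lambda>v. sum w (fst (play n V E w (insert v S) F))) (moves V E S F) = b"
        unfolding b_def moves_commute[of V E S F] by (rule arg_max_on_cong) (simp add: IH)
      then have "play (Suc n) V E w S F = play n V E w (insert b S) F"
        using ne' lighter by simp
      then show ?thesis using IH[OF second(2)] second(1) by simp
    qed
  qed
qed simp

lemma first_set_le_game_value: "a \<in> V \<Longrightarrow> sum w (first_set V E w a) \<le> game_value V E w"
  unfolding game_value_def using finite_V by (intro Max_ge) auto

lemma game_value_gt_third: "game_value V E w > 1/3"
proof -
  have "Max (w ` V) \<in> w ` V" using finite_V V_nonempty by simp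
  then obtain m where m: "m \<in> V" "w m = Max (w ` V)" by (metis imageE)
  then have heaviest: "w v \<le> w m" if "v \<in> V" for v
    using that finite_V by simp
  define Q where "Q F S \<longleftrightarrow> m \<in> F \<and> (S = {} \<or> sum w S < sum w F + w m)" for F S
  have start: "position {m} {}" using m by (simp add: position_def)
  let ?F = "fst (play (card V - 1) V E w {m} {})" and ?S = "snd (play (card V - 1) V E w {m} {})"
  have "Q ?F ?S"
  proof (rule play_invariant[OF start])
    show "Q {m} {}" by (simp add: Q_def)
  next
    fix F S v
    assume "position F S" "Q F S" "v \<in> moves V E F S" "sum w F < sum w S"
    moreover have "finite F" "v \<notin> F" "v \<in> V"
      using calculation moves_subset[of V E F S] by (auto simp: position_def intro: finite_subset_V)
    ultimately show "Q (insert v F) S"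
      using weight_pos[of v] by (auto simp: Q_def)
  next
    fix F S v
    assume "position F S" "Q F S" "v \<in> moves V E F S" "sum w S < sum w F"
    moreover have "finite S" "v \<notin> S" "v \<in> V"
      using calculation moves_subset[of V E F S] by (auto simp: position_def intro: finite_subset_V)
    ultimately show "Q F (insert v S)"
      using heaviest[of v] by (auto simp: Q_def)
  qed
  moreover have "?F \<subseteq> V"
    using play_position(1)[OF start] by (simp add: position_def)
  moreover have "sum w ?F + sum w ?S = 1"
    using play_sum_weights[OF start] finite_V m(1) by simp
  ultimately have "sum w ?F > 1/3"
    using weight_le_sum[of ?F m] weight_pos[OF m(1)] unfolding Q_def by auto
  then show ?thesis
    using first_set_le_game_value[OF m(1)] unfolding first_set_def by linarith
qed

definition reply_value :: "nat \<Rightarrow> nat \<Rightarrow> real" where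
  "reply_value a b = sum w (fst (play (card V - 2) V E w {a} {b}))"

lemma reply_value_complementary:
  assumes "E a b"
  shows "reply_value a b + reply_value b a = 1" and "reply_value a b \<noteq> 1/2"
proof -
  have ab: "position {a} {b}"
    using assms edge_in_V loopless by (auto simp: position_def)
  have "card (V - ({a} \<union> {b})) = card V - 2"
    using ab finite_V by (auto simp: position_def card_Diff_subset)
  then have complete: "card (V - ({a} \<union> {b})) \<le> card V - 2" by simp
  show sum_one: "reply_value a b + reply_value b a = 1"
    using play_sum_weights[OF ab complete] by (simp add: reply_value_def play_swap[OF ab])
  have "reply_value a b \<noteq> reply_value b a"
    using position_sums_differ[OF play_position(1)[OF ab]]
    by (simp add: reply_value_def play_swap[OF ab])
  then show "reply_value a b \<noteq> 1/2" using sum_one by auto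
qed

lemma first_set_opening:
  assumes "a \<in> V" "card V \<ge> 2"
  obtains b where "E a b" "sum w (first_set V E w a) = reply_value a b"
proof -
  have start: "position {a} {}" using assms(1) by (simp add: position_def)
  have "{a} \<noteq> V" using assms by auto
  then have ne: "moves V E {a} {} \<noteq> {}"
    using moves_nonempty[OF start] by simp
  have not_lighter: "\<not> sum w {a} < sum w {}"
    using weight_pos[OF assms(1)] by simp
  have "card V - 1 = Suc (card V - 2)" using assms(2) by simp
  then show ?thesis
    using that play_Suc_second[OF ne not_lighter, of "card V - 2"]
    unfolding first_set_def reply_value_def moves_def by auto
qed

lemma game_value_gt_half_if_tree:
  assumes "is_tree V E"
  shows "game_value V E w > 1/2"
proof (cases "card V \<ge> 2")
  case False
  have "0 < card V" using finite_V V_nonempty by (simp add: card_gt_0_iff)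
  with False have "card V = 1" by linarith
  then obtain a where "V = {a}" by (rule card_1_singletonE)
  then show ?thesis
    using sum_weights first_set_le_game_value[of a] by (simp add: first_set_def)
next
  case True
  define R where "R a b \<longleftrightarrow> E a b \<and> reply_value a b < 1/2" for a b
  obtain a where a: "a \<in> V" "\<forall>b. \<not> R a b"
  proof -
    have "\<exists>a\<in>V. \<forall>b. \<not> R a b"
    proof (rule acyclic_orientation_has_sink[OF finite_V V_nonempty])
      show "\<not> has_cycle V E" using assms by (simp add: is_tree_def)
      show "\<not> R v u" if "R u v" for u v
        using that reply_value_complementary(1)[of u v] unfolding R_def by linarith
    qed (use edge_in_V loopless in \<open>auto simp: R_def\<close>)
    then show ?thesis using that by blast
  qed
  obtain b where b: "E a b" "sum w (first_set V E w a) = reply_value a b"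
    using first_set_opening[OF a(1) True] .
  have "reply_value a b > 1/2"
    using a(2) reply_value_complementary(2)[OF b(1)] b(1) unfolding R_def by auto
  then show ?thesis
    using first_set_le_game_value[OF a(1)] b(2) by linarith
qed

end

definition move_list :: "nat list \<Rightarrow> (nat \<Rightarrow> nat \<Rightarrow> bool) \<Rightarrow> nat set \<Rightarrow> nat set \<Rightarrow> nat list" where
  "move_list vs E F S = filter (\<lambda>v. v \<notin> F \<and> v \<notin> S \<and> (\<exists>u\<in>F \<union> S. E u v)) vs"

lemma set_move_list: "set (move_list vs E F S) = moves (set vs) E F S"
  unfolding moves_def move_list_def by auto

text \<open>
  Turns are decided by \<open>lighter\<close> rather than by the weights, so that for a concrete instance
  the predicate can be evaluated by rewriting.
\<close>
primrec second_can_force :: "nat \<Rightarrow> nat list \<Rightarrow> (nat \<Rightarrow> nat \<Rightarrow> bool) \<Rightarrow>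
    (nat set \<Rightarrow> nat set \<Rightarrow> bool) \<Rightarrow> (nat set \<Rightarrow> bool) \<Rightarrow> nat set \<Rightarrow> nat set \<Rightarrow> bool" where
  "second_can_force 0 vs E lighter goal F S = goal F"
| "second_can_force (Suc n) vs E lighter goal F S =
     (if move_list vs E F S = [] then goal F
      else if lighter F S
      then list_all (\<lambda>v. second_can_force n vs E lighter goal (insert v F) S) (move_list vs E F S)
      else list_ex (\<lambda>v. second_can_force n vs E lighter goal F (insert v S)) (move_list vs E F S))"

context sharing_game
begin

lemma play_first_le_if_second_can_force:
  assumes V: "set vs = V"
    and lighter: "\<And>A B. A \<subseteq> V \<Longrightarrow> B \<subseteq> V \<Longrightarrow> lighter A B \<longleftrightarrow> sum w A < sum w B"
    and goal: "\<And>A. A \<subseteq> V \<Longrightarrow> goal A \<longleftrightarrow> sum w A \<le> c"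
    and "position F S" "card (V - (F \<union> S)) \<le> n"
    and "second_can_force n vs E lighter goal F S"
  shows "sum w (fst (play n V E w F S)) \<le> c"
  using assms(4-6)
proof (induction n arbitrary: F S)
  case 0
  then show ?case using goal by (simp add: position_def)
next
  case (Suc n)
  note moves = set_move_list[of vs E F S, unfolded V]
  have FS: "F \<subseteq> V" "S \<subseteq> V" using Suc.prems(1) by (auto simp: position_def)
  have IH: "sum w (fst (play n V E w F' S')) \<le> c"
    if "v \<in> moves V E F S" "insert v (F \<union> S) = F' \<union> S'" "position F' S'"
      "second_can_force n vs E lighter goal F' S'" for v F' S'
    using Suc.IH[OF that(3) _ that(4)] card_remaining_insert[OF that(1)] that(2) Suc.prems(2) by simp
  consider "moves V E F S = {}" | "moves V E F S \<noteq> {}" "sum w F < sum w S"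
    | "moves V E F S \<noteq> {}" "\<not> sum w F < sum w S" by blast
  then show ?case
  proof cases
    case 1
    then show ?thesis using Suc.prems(3) moves goal FS by simp
  next
    case 2
    define b where "b = arg_max_on (\<lambda>v. sum w (fst (play n V E w (insert v F) S))) (moves V E F S)"
    note first = play_Suc_first[where n = n, OF 2, folded b_def]
    have "move_list vs E F S \<noteq> []" "lighter F S"
      using moves 2 lighter[OF FS] by auto
    then have "second_can_force n vs E lighter goal (insert b F) S"
      using Suc.prems(3) first(2) moves by (simp add: list_all_iff)
    then show ?thesis
      using IH[OF first(2) _ position_insert(1)[OF Suc.prems(1) first(2)]] first(1) by simp
  next
    case 3
    have "move_list vs E F S \<noteq> []" "\<not> lighter F S"
      using moves 3 lighter[OF FS] by auto
    then obtain v where v: "v \<in> moves V E F S" "second_can_force n vs E lighter goal F (insert v S)"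
      using Suc.prems(3) moves by (auto simp: list_ex_iff)
    define b where "b = arg_max_on (\<lambda>v. sum w (snd (play n V E w F (insert v S)))) (moves V E F S)"
    note second = play_Suc_second[where n = n, OF 3, folded b_def]
    have v_le: "sum w (fst (play n V E w F (insert v S))) \<le> c"
      using IH[OF v(1) _ position_insert(2)[OF Suc.prems(1) v(1)] v(2)] by simp
    have sum_one: "sum w (fst (play n V E w F (insert u S))) + sum w (snd (play n V E w F (insert u S))) = 1"
      if "u \<in> moves V E F S" for u
      using play_sum_weights[OF position_insert(2)[OF Suc.prems(1) that]]
        card_remaining_insert[OF that] Suc.prems(2) by simp
    \<comment> \<open>2nd's optimal reply leaves 1st no more than the witnessing reply \<open>v\<close> does.\<close>
    show ?thesis
      using second(1) second(3)[OF v(1)] sum_one[OF v(1)] sum_one[OF second(2)] v_le by simp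
  qed
qed

lemma game_value_le_if_second_can_force:
  assumes V: "set vs = V"
    and lighter: "\<And>A B. A \<subseteq> V \<Longrightarrow> B \<subseteq> V \<Longrightarrow> lighter A B \<longleftrightarrow> sum w A < sum w B"
    and goal: "\<And>A. A \<subseteq> V \<Longrightarrow> goal A \<longleftrightarrow> sum w A \<le> c"
    and force: "\<forall>a\<in>V. second_can_force (card V - 1) vs E lighter goal {a} {}"
  shows "game_value V E w \<le> c"
proof -
  have "sum w (first_set V E w a) \<le> c" if "a \<in> V" for a
    unfolding first_set_def
    using play_first_le_if_second_can_force[OF V lighter goal, of "{a}" "{}"] force that finite_V
    by (simp add: position_def)
  then show ?thesis
    unfolding game_value_def using finite_V V_nonempty by simp
qed

end

lemma set_encode_less_power: "A \<subseteq> {..<n} \<Longrightarrow> set_encode A < 2 ^ n"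
proof (induction n arbitrary: A)
  case (Suc n)
  have "A - {n} \<subseteq> {..<n}"
    using Suc.prems by auto
  moreover from this have "finite (A - {n})"
    by (rule finite_subset) simp
  moreover have "set_encode A \<le> 2 ^ n + set_encode (A - {n})"
  proof (cases "n \<in> A")
    case True
    then show ?thesis
      using set_encode_insert[OF calculation(2), of n] by (simp add: insert_absorb)
  qed simp
  ultimately show ?case using Suc.IH[of "A - {n}"] by simp
qed simp

text \<open>The low binary digits \<open>2 ^ i\<close> make all subset sums of the tagged weights distinct.\<close>
lemma tagged_sum_eq_imp_eq:
  fixes N P :: "nat \<Rightarrow> nat"
  assumes "A \<subseteq> {..<n}" "B \<subseteq> {..<n}" "2 ^ n \<le> M" "\<And>i. N i = M * P i + 2 ^ i"
    and "sum N A = sum N B"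
  shows "A = B"
proof -
  have decompose: "sum N X = M * sum P X + set_encode X" for X
    using assms(4) by (simp add: sum.distrib sum_distrib_left set_encode_def)
  have "set_encode A < M" "set_encode B < M"
    using set_encode_less_power[OF assms(1)] set_encode_less_power[OF assms(2)] assms(3) by linarith+
  then have "set_encode A = set_encode B"
    using arg_cong[OF assms(5), of "\<lambda>x. x mod M"] unfolding decompose by simp
  then show ?thesis
    using set_encode_eq assms(1,2) by (meson finite_lessThan finite_subset)
qed

lemma game_instance_tagged_weights:
  fixes N P :: "nat \<Rightarrow> nat"
  assumes "simple_graph V E" "graph_connected V E" "V \<subseteq> {..<n}" "2 ^ n \<le> M"
    and tagged: "\<And>i. N i = M * P i + 2 ^ i"
  shows "game_instance V E (\<lambda>i. real (N i) / real (sum N V))"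
proof -
  have "finite V" "V \<noteq> {}"
    using assms(1) by (auto simp: simple_graph_def)
  moreover have N_pos: "0 < N v" for v
    using tagged[of v] by simp
  ultimately have le: "N v \<le> sum N V" if "v \<in> V" for v
    using that by (intro member_le_sum) auto
  have pos: "0 < sum N V"
    using le N_pos \<open>V \<noteq> {}\<close> by (metis all_not_in_conv order_less_le_trans)
  have sum_weight: "sum (\<lambda>i. real (N i) / real (sum N V)) X = real (sum N X) / real (sum N V)" for X
    by (simp add: sum_divide_distrib)
  have distinct: "sum N A \<noteq> sum N B" if "A \<subseteq> V" "B \<subseteq> V" "A \<noteq> B" for A B
    using tagged_sum_eq_imp_eq[OF _ _ assms(4) tagged, of A B] that assms(3) by blast
  show ?thesis
    unfolding game_instance_def sum_weight
  proof (intro conjI ballI allI impI)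
    fix A B assume "A \<subseteq> V" "B \<subseteq> V" "A \<noteq> B"
    then show "real (sum N A) / real (sum N V) \<noteq> real (sum N B) / real (sum N V)"
      using distinct pos by (simp del: of_nat_sum)
  qed (use assms(1,2) pos le N_pos in \<open>simp_all del: of_nat_sum\<close>)
qed

lemma lex_less:
  fixes K h1 h2 r1 r2 :: nat
  assumes "r1 < K" "r2 < K"
  shows "K * h1 + r1 < K * h2 + r2 \<longleftrightarrow> h1 < h2 \<or> (h1 = h2 \<and> r1 < r2)"
proof (cases h1 h2 rule: linorder_cases)
  case less
  then have "K * (h1 + 1) \<le> K * h2" by (intro mult_le_mono2) simp
  then show ?thesis using less assms by simp
next
  case greater
  then have "K * (h2 + 1) \<le> K * h1" by (intro mult_le_mono2) simp
  then show ?thesis using greater assms by simp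
qed simp

lemma lex_le_one:
  fixes K h r c :: nat
  assumes "r < K" "c < K"
  shows "K * h + r \<le> K + c \<longleftrightarrow> h = 0 \<or> (h = 1 \<and> r \<le> c)"
proof (cases "h \<ge> 2")
  case True
  then have "K * 2 \<le> K * h" by (rule mult_le_mono2)
  then show ?thesis using True assms by linarith
qed (use assms in \<open>auto simp: not_le less_2_cases_iff\<close>)

lemma Inf_eq_if_upper_bounds_tend:
  fixes X :: "real set" and u :: "nat \<Rightarrow> real"
  assumes lower: "\<And>x. x \<in> X \<Longrightarrow> c \<le> x"
    and "u \<longlonglongrightarrow> c" and upper: "\<forall>\<^sub>F k in sequentially. \<exists>x\<in>X. x \<le> u k"
  shows "Inf X = c"
proof (rule antisym)
  have "bdd_below X" using lower by (auto simp: bdd_below_def)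
  have "\<forall>\<^sub>F k in sequentially. Inf X \<le> u k"
    using upper by eventually_elim (meson \<open>bdd_below X\<close> cInf_lower order_trans)
  then show "Inf X \<le> c"
    using tendsto_lowerbound[OF \<open>u \<longlonglongrightarrow> c\<close>] by simp
  have "X \<noteq> {}" using eventually_happens'[OF _ upper] by auto
  then show "c \<le> Inf X" using lower by (rule cInf_greatest)
qed

definition pair_adj :: "nat \<Rightarrow> nat \<Rightarrow> bool" where
  "pair_adj u v \<longleftrightarrow> (u = 0 \<and> v = 1) \<or> (u = 1 \<and> v = 0)"

definition pair_weight :: "nat \<Rightarrow> nat \<Rightarrow> real" where
  "pair_weight k i = real (4 * k + 2 ^ i) / real (8 * k + 3)"

lemma pair_instance: "game_instance {0..<2} pair_adj (pair_weight k)"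
proof -
  have "simple_graph {0..<2} pair_adj"
    by (auto simp: simple_graph_def pair_adj_def)
  moreover have "graph_connected {0..<2} pair_adj"
  proof (rule graph_connected_if_reaches)
    have "pair_adj 1 0" by (simp add: pair_adj_def)
    then show "pair_adj\<^sup>*\<^sup>* v 0" if "v \<in> {0..<2}" for v
      using that by (auto simp: less_2_cases_iff)
  qed (auto simp: pair_adj_def)
  moreover have "sum (\<lambda>i. 4 * k + 2 ^ i) {0..<2} = 8 * k + 3"
    by (simp add: eval_nat_numeral)
  ultimately show ?thesis
    using game_instance_tagged_weights[of "{0..<2}" pair_adj 2 4 "\<lambda>i. 4 * k + 2 ^ i" "\<lambda>i. k"]
    unfolding pair_weight_def by (simp add: atLeast0LessThan)
qed

lemma pair_is_tree: "is_tree {0..<2} pair_adj"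
proof -
  have "\<not> has_cycle {0..<2} pair_adj"
  proof
    assume "has_cycle {0..<2} pair_adj"
    then obtain xs where "length xs \<ge> 3" "distinct xs" "set xs \<subseteq> {0..<2::nat}"
      unfolding has_cycle_def by blast
    then show False
      using card_mono[of "{0..<2::nat}" "set xs"] by (simp add: distinct_card)
  qed
  then show ?thesis
    using pair_instance by (simp add: is_tree_def game_instance_def)
qed

lemma pair_value_le: "game_value {0..<2} pair_adj (pair_weight k) \<le> real (4 * k + 2) / real (8 * k + 3)"
proof (rule sharing_game.game_value_le_if_second_can_force)
  show "sharing_game {0..<2} pair_adj (pair_weight k)"
    using pair_instance by (simp add: sharing_game_def)
  show "set [0, 1] = {0..<2::nat}" by auto
  show "\<forall>a\<in>{0..<2}. second_can_force (card {0..<2::nat} - 1) [0, 1] pair_adj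
      (\<lambda>A B. sum (pair_weight k) A < sum (pair_weight k) B)
      (\<lambda>A. sum (pair_weight k) A \<le> real (4 * k + 2) / real (8 * k + 3)) {a} {}"
    by (auto simp: One_nat_def move_list_def pair_adj_def pair_weight_def less_2_cases_iff
        divide_le_cancel divide_less_0_iff not_less)
qed simp_all

definition six_adj :: "nat \<Rightarrow> nat \<Rightarrow> bool" where
  "six_adj u v \<longleftrightarrow> (u, v) \<in> set [(0,1),(0,4),(0,5),(1,2),(1,3),(1,4),(2,5),(4,5)] \<or>
                   (v, u) \<in> set [(0,1),(0,4),(0,5),(1,2),(1,3),(1,4),(2,5),(4,5)]"

text \<open>Vertices 2, 3 and 4 are the heavy ones, of weight about \<open>1/3\<close> each once \<open>k\<close> is large.\<close>
definition six_tag :: "nat \<Rightarrow> nat \<Rightarrow> nat" where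
  "six_tag k i = 64 * [10, 20, k + 5, k + 22, k, 13] ! i + 2 ^ i"

definition six_weight :: "nat \<Rightarrow> nat \<Rightarrow> real" where
  "six_weight k i = real (six_tag k i) / real (192 * k + 4543)"

lemma six_vertices: "set [0, 1, 2, 3, 4, 5] = {0..<6::nat}"
  by auto

lemma sum_six_tag: "sum (six_tag k) {0..<6} = 192 * k + 4543"
  by (simp add: six_tag_def eval_nat_numeral)

lemma six_instance: "game_instance {0..<6} six_adj (six_weight k)"
proof -
  have "simple_graph {0..<6} six_adj"
    by (auto simp: simple_graph_def six_adj_def)
  moreover have "graph_connected {0..<6} six_adj"
  proof (rule graph_connected_if_reaches)
    show "six_adj\<^sup>*\<^sup>* v 0" if "v \<in> {0..<6}" for v
    proof -
      have "v = 0 \<or> six_adj v 0 \<or> six_adj v 1"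
        using that by (auto simp: six_adj_def simp flip: six_vertices)
      moreover have "six_adj 1 0" by (simp add: six_adj_def)
      ultimately show ?thesis
        by (meson converse_rtranclp_into_rtranclp r_into_rtranclp rtranclp.rtrancl_refl)
    qed
  qed (auto simp: six_adj_def)
  ultimately show ?thesis
    using game_instance_tagged_weights[of "{0..<6}" six_adj 6 64 "six_tag k"
        "\<lambda>i. [10, 20, k + 5, k + 22, k, 13] ! i"]
    unfolding six_weight_def sum_six_tag by (simp add: six_tag_def atLeast0LessThan)
qed

definition six_heavy :: "nat set \<Rightarrow> nat" where
  "six_heavy A = card (A \<inter> {2, 3, 4})"

definition six_light :: "nat set \<Rightarrow> nat" where
  "six_light A = sum (six_tag 0) A"

definition six_lighter :: "nat set \<Rightarrow> nat set \<Rightarrow> bool" where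
  "six_lighter A B \<longleftrightarrow> six_heavy A < six_heavy B \<or> (six_heavy A = six_heavy B \<and> six_light A < six_light B)"

definition six_goal :: "nat set \<Rightarrow> bool" where
  "six_goal A \<longleftrightarrow> six_heavy A = 0 \<or> (six_heavy A = 1 \<and> six_light A \<le> 4203)"

lemmas second_can_force_numeral =
  second_can_force.simps(2)[of "pred_numeral m" for m, unfolded numeral_eq_Suc[symmetric]]

lemma six_tag_zero: "six_tag 0 0 = 641" "six_tag 0 (Suc 0) = 1282" "six_tag 0 2 = 324"
  "six_tag 0 3 = 1416" "six_tag 0 4 = 16" "six_tag 0 5 = 864"
  by (simp_all add: six_tag_def)

lemma six_second_can_force:
  "\<forall>a\<in>{0..<6}. second_can_force 5 [0, 1, 2, 3, 4, 5] six_adj six_lighter six_goal {a} {}"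
  by (simp add: move_list_def six_adj_def six_lighter_def six_goal_def six_heavy_def six_light_def
      six_tag_zero second_can_force_numeral atLeast0LessThan lessThan_nat_numeral)

lemma sum_six_tag_split:
  assumes "A \<subseteq> {0..<6}"
  shows "sum (six_tag k) A = 64 * k * six_heavy A + six_light A"
proof -
  have "six_tag k i = six_tag 0 i + (if i \<in> {2, 3, 4} then 64 * k else 0)" if "i \<in> A" for i
  proof -
    have "i \<in> set [0, 1, 2, 3, 4, 5]" using that assms six_vertices by blast
    then show ?thesis by (auto simp: six_tag_def)
  qed
  then have "sum (six_tag k) A = six_light A + sum (\<lambda>i. if i \<in> {2, 3, 4} then 64 * k else 0) A"
    unfolding six_light_def using sum.cong[OF refl] by (simp add: sum.distrib)
  also have "\<dots> = six_light A + 64 * k * six_heavy A"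
    using sum.inter_restrict[OF finite_subset[OF assms], of "\<lambda>i. 64 * k" "{2, 3, 4}"]
    by (simp add: six_heavy_def mult.commute)
  finally show ?thesis by simp
qed

lemma six_light_le: "A \<subseteq> {0..<6} \<Longrightarrow> six_light A \<le> 4543"
  using sum_mono2[of "{0..<6}" A "six_tag 0"] sum_six_tag[of 0] by (simp add: six_light_def)

lemma six_value_le:
  assumes "k \<ge> 1000"
  shows "game_value {0..<6} six_adj (six_weight k) \<le> real (64 * k + 4203) / real (192 * k + 4543)"
proof (rule sharing_game.game_value_le_if_second_can_force[OF _ six_vertices])
  show "sharing_game {0..<6} six_adj (six_weight k)"
    using six_instance by (simp add: sharing_game_def)
  have sum_weight: "sum (six_weight k) A = real (64 * k * six_heavy A + six_light A) / real (192 * k + 4543)"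
    if "A \<subseteq> {0..<6}" for A
    unfolding six_weight_def sum_divide_distrib[symmetric] of_nat_sum[symmetric] sum_six_tag_split[OF that] ..
  have small: "six_light A < 64 * k" if "A \<subseteq> {0..<6}" for A
    using six_light_le[OF that] assms by linarith
  show "six_lighter A B \<longleftrightarrow> sum (six_weight k) A < sum (six_weight k) B"
    if "A \<subseteq> {0..<6}" "B \<subseteq> {0..<6}" for A B
    using lex_less[OF small[OF that(1)] small[OF that(2)]]
    unfolding sum_weight[OF that(1)] sum_weight[OF that(2)] six_lighter_def
    by (simp add: divide_less_cancel del: of_nat_add of_nat_mult)
  show "six_goal A \<longleftrightarrow> sum (six_weight k) A \<le> real (64 * k + 4203) / real (192 * k + 4543)"
    if "A \<subseteq> {0..<6}" for A
    using lex_le_one[OF small[OF that], of 4203] assms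
    unfolding sum_weight[OF that] six_goal_def
    by (simp add: divide_le_cancel del: of_nat_add of_nat_mult)
  show "\<forall>a\<in>{0..<6}. second_can_force (card {0..<6::nat} - 1) [0, 1, 2, 3, 4, 5] six_adj six_lighter six_goal {a} {}"
    using six_second_can_force by simp
qed

theorem theorem1:
  shows "Inf {game_value V E w | V E w. game_instance V E w} = 1/3 \<and>
         Inf {game_value V E w | V E w. game_instance V E w \<and> is_tree V E} = 1/2"
proof
  show "Inf {game_value V E w | V E w. game_instance V E w} = 1/3"
  proof (rule Inf_eq_if_upper_bounds_tend)
    show "x \<in> {game_value V E w | V E w. game_instance V E w} \<Longrightarrow> 1/3 \<le> x" for x
      using sharing_game.game_value_gt_third by (fastforce simp: sharing_game_def)
    show "(\<lambda>k. real (64 * k + 4203) / real (192 * k + 4543)) \<longlonglongrightarrow> 1/3"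
      by real_asymp
    show "\<forall>\<^sub>F k in sequentially. \<exists>x\<in>{game_value V E w | V E w. game_instance V E w}.
        x \<le> real (64 * k + 4203) / real (192 * k + 4543)"
      using eventually_ge_at_top[of 1000] by eventually_elim (use six_instance six_value_le in blast)
  qed
  show "Inf {game_value V E w | V E w. game_instance V E w \<and> is_tree V E} = 1/2"
  proof (rule Inf_eq_if_upper_bounds_tend)
    show "x \<in> {game_value V E w | V E w. game_instance V E w \<and> is_tree V E} \<Longrightarrow> 1/2 \<le> x" for x
      using sharing_game.game_value_gt_half_if_tree by (fastforce simp: sharing_game_def)
    show "(\<lambda>k. real (4 * k + 2) / real (8 * k + 3)) \<longlonglongrightarrow> 1/2"
      by real_asymp
    show "\<forall>\<^sub>F k in sequentially. \<exists>x\<in>{game_value V E w | V E w. game_instance V E w \<and> is_tree V E}.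
        x \<le> real (4 * k + 2) / real (8 * k + 3)"
      by (intro always_eventually) (use pair_instance pair_is_tree pair_value_le in blast)
  qed
qed

end
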